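(* Let $0<1/N_0,1/D_0,1/C_0\ll1/r\le1/3$ with $r\in\mathbb N$. Let $N\ge N_0$, $C\ge C_0$, $D\ge D_0$, and let $\mathcal H$ be an $N$-vertex linear multi-hypergraph with maximum degree $\Delta(\mathcal H)\le D$ in which every edge has size at most $r$. Then there is an $r$-uniform linear hypergraph $\mathcal H_{\mathrm{unif}}$ such that: (1) $\mathcal H\subseteq\mathcal H_{\mathrm{unif}}|_{V(\mathcal H)}$ and $\mathcal H_{\mathrm{unif}}|_{V(\mathcal H)}\setminus\mathcal H$ contains only singleton edges; (2) every $v\in V(\mathcal H_{\mathrm{unif}})$ satisfies $D-C\le d_{\mathcal H_{\mathrm{unif}}}(v)\le D$, and moreover every $v\in V(\mathcal H)$ with $d_{\mathcal H}(v)\ge D-C$ satisfies $d_{\mathcal H_{\mathrm{unif}}}(v)=d_{\mathcal H}(v)$; (3) $|V(\mathcal H_{\mathrm{unif}})|\le r(r-1)^2D^3N$.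
   Context: A multi-hypergraph has a finite vertex set and a multiset of nonempty edges. A linear multi-hypergraph is one in which any two distinct edges of size at least two intersect in at most one vertex (so only singleton edges may be repeated); a linear hypergraph has no repeated edges. Degree $d_{\mathcal H}(v)$ is the number of edges (with multiplicity) containing $v$; $r$-uniform means all edges have size $r$. For $S\subseteq V(\mathcal H')$, $\mathcal H'|_S$ is the multi-hypergraph on vertex set $S$ with edge multiset $\{e\cap S: e\in\mathcal H',\ e\cap S\ne\varnothing\}$. Hierarchy: $N_0,D_0,C_0$ sufficiently large in terms of $r$. *)

theory Defs
  imports Main "HOL-Library.Multiset"
begin

definition multi_hypergraph :: "'a set \<Rightarrow> 'a set multiset \<Rightarrow> bool" where
  "multi_hypergraph V E \<longleftrightarrow> finite V \<and> (\<forall>e\<in>#E. e \<noteq> {} \<and> e \<subseteq> V)"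

text \<open>Linear multi-hypergraph: any two distinct edges (distinct members of the
multiset, so two copies of the same edge count as distinct) of size at least two
meet in at most one vertex; hence only singleton edges may be repeated.\<close>
definition linear_multi_hypergraph :: "'a set \<Rightarrow> 'a set multiset \<Rightarrow> bool" where
  "linear_multi_hypergraph V E \<longleftrightarrow> multi_hypergraph V E \<and>
     (\<forall>e\<in>#E. \<forall>f\<in>#E. 2 \<le> card e \<longrightarrow> 2 \<le> card f \<longrightarrow> e \<noteq> f \<longrightarrow> card (e \<inter> f) \<le> 1) \<and>
     (\<forall>e\<in>#E. 2 \<le> card e \<longrightarrow> count E e = 1)"

definition linear_hypergraph :: "'a set \<Rightarrow> 'a set multiset \<Rightarrow> bool" where
  "linear_hypergraph V E \<longleftrightarrow> linear_multi_hypergraph V E \<and> (\<forall>e. count E e \<le> 1)"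

definition hdeg :: "'a set multiset \<Rightarrow> 'a \<Rightarrow> nat" where
  "hdeg E v = size (filter_mset (\<lambda>e. v \<in> e) E)"

definition uniform :: "nat \<Rightarrow> 'a set multiset \<Rightarrow> bool" where
  "uniform r E \<longleftrightarrow> (\<forall>e\<in>#E. card e = r)"

definition restrict_edges :: "'a set multiset \<Rightarrow> 'a set \<Rightarrow> 'a set multiset" where
  "restrict_edges E S = image_mset (\<lambda>e. e \<inter> S) (filter_mset (\<lambda>e. e \<inter> S \<noteq> {}) E)"

end

(* Pad every edge of size at least two, every singleton edge {v}, and D - d(v) new singleton
   edges {v} at each vertex v with d(v) < D - C, up to size r with fresh vertices.  Each fresh
   vertex is the point (0, 0) of its own gadget: the lines {(i, (a + s i) mod q) | i < r},
   a < q, s < D - 1, in the grid [r] x Z_q with q = r D.  Two such lines agreeing in columns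
   i <> j would give q | (s - s') (i - j), a number of absolute value below q, so the gadget is
   linear; every grid point lies on exactly D - 1 lines.  Hence padding vertices get degree D,
   the other gadget vertices D - 1, and a vertex of V ends with degree D or keeps d(v).  Padded
   edges meet only inside V, so linearity is inherited from the input; there are at most D N of
   them, which bounds the number of gadgets and thus of vertices. *)

theory Submission
  imports Defs "HOL-Library.Nat_Bijection" "HOL-Library.Countable_Set" "HOL-Number_Theory.Cong"
begin

definition grid_line :: "nat \<Rightarrow> nat \<Rightarrow> nat \<Rightarrow> nat \<Rightarrow> (nat \<times> nat) set" where
  "grid_line q r s a = (\<lambda>i. (i, (a + s * i) mod q)) ` {..<r}"

lemma mem_grid_line: "(i, x) \<in> grid_line q r s a \<longleftrightarrow> i < r \<and> x = (a + s * i) mod q"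
  by (auto simp: grid_line_def)

lemma card_grid_line: "card (grid_line q r s a) = r"
  unfolding grid_line_def by (subst card_image) (auto simp: inj_on_def)

lemma grid_line_subset: "0 < q \<Longrightarrow> grid_line q r s a \<subseteq> {..<r} \<times> {..<q}"
  by (auto simp: grid_line_def)

lemma grid_lines_meet_in_one_column:
  assumes "r * m \<le> q" "s < m" "s' < m" "a < q" "a' < q" "(s, a) \<noteq> (s', a')"
    and "(i, x) \<in> grid_line q r s a \<inter> grid_line q r s' a'"
    and "(j, y) \<in> grid_line q r s a \<inter> grid_line q r s' a'"
  shows "i = j"
proof (rule ccontr)
  assume "i \<noteq> j"
  have "[a + s * i = a' + s' * i] (mod q)" "[a + s * j = a' + s' * j] (mod q)"
    using assms(7,8) by (auto simp: mem_grid_line cong_def)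
  then have "int q dvd int a + int s * int i - (int a' + int s' * int i)"
    "int q dvd int a + int s * int j - (int a' + int s' * int j)"
    unfolding cong_int_iff[symmetric] cong_iff_dvd_diff by simp_all
  then have "int q dvd (int a + int s * int i - (int a' + int s' * int i))
                 - (int a + int s * int j - (int a' + int s' * int j))"
    by (rule dvd_diff)
  also have "\<dots> = (int s - int s') * (int i - int j)"
    by (simp add: algebra_simps)
  finally have dvd: "int q dvd (int s - int s') * (int i - int j)" .
  have "\<bar>int s - int s'\<bar> < int m" "\<bar>int i - int j\<bar> < int r"
    using assms(2,3,7,8) by (auto simp: mem_grid_line)
  then have "\<bar>int s - int s'\<bar> * \<bar>int i - int j\<bar> < int m * int r"
    by (rule mult_strict_mono') simp_all
  also have "\<dots> \<le> int q"
    using assms(1) by (metis mult.commute of_nat_mono of_nat_mult)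
  finally have "\<bar>(int s - int s') * (int i - int j)\<bar> < \<bar>int q\<bar>"
    by (simp add: abs_mult)
  with dvd have "(int s - int s') * (int i - int j) = 0"
    using dvd_imp_le_int by (meson linorder_not_less)
  with \<open>i \<noteq> j\<close> have "s = s'" by simp
  with \<open>[a + s * i = a' + s' * i] (mod q)\<close> have "[a = a'] (mod q)"
    by (simp add: cong_add_rcancel_nat)
  then have "a = a'" using assms(4,5) by (rule cong_less_modulus_unique_nat)
  with \<open>s = s'\<close> assms(6) show False by simp
qed

lemma card_grid_line_Int:
  assumes "r * m \<le> q" "s < m" "s' < m" "a < q" "a' < q" "(s, a) \<noteq> (s', a')"
  shows "card (grid_line q r s a \<inter> grid_line q r s' a') \<le> 1"
proof -
  have "(i, x) = (j, y)" if "(i, x) \<in> grid_line q r s a \<inter> grid_line q r s' a'"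
    "(j, y) \<in> grid_line q r s a \<inter> grid_line q r s' a'" for i x j y
    using that grid_lines_meet_in_one_column[OF assms that] by (simp add: mem_grid_line)
  moreover have "finite (grid_line q r s a \<inter> grid_line q r s' a')"
    by (simp add: grid_line_def)
  ultimately show ?thesis
    unfolding One_nat_def by (subst card_le_Suc0_iff_eq) auto
qed

lemma card_shift_mod_preimage:
  fixes c q x :: nat
  assumes "x < q"
  shows "card {a. a < q \<and> (a + c) mod q = x} = 1"
proof -
  let ?f = "\<lambda>a. (a + c) mod q"
  have inj: "inj_on ?f {..<q}"
  proof (rule inj_onI)
    fix a b assume ab: "a \<in> {..<q}" "b \<in> {..<q}" and "?f a = ?f b"
    then have "[a + c = b + c] (mod q)" by (simp only: cong_def)
    then have "[a = b] (mod q)" by (simp only: cong_add_rcancel_nat)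
    with ab show "a = b"
      by (auto intro: cong_less_modulus_unique_nat)
  qed
  have "?f ` {..<q} = {..<q}"
    using assms by (intro endo_inj_surj inj) auto
  then have "x \<in> ?f ` {..<q}"
    using assms by simp
  then obtain a where a: "a < q" "?f a = x" by blast
  with inj have "{a. a < q \<and> ?f a = x} = {a}" by (auto dest: inj_onD)
  then show ?thesis by simp
qed

lemma card_grid_lines_through:
  assumes "x < q"
  shows "card {(s, a). s < m \<and> a < q \<and> (i, x) \<in> grid_line q r s a} = (if i < r then m else 0)"
proof -
  have "{(s, a). s < m \<and> a < q \<and> (i, x) \<in> grid_line q r s a}
      = (if i < r then Sigma {..<m} (\<lambda>s. {a. a < q \<and> (a + s * i) mod q = x}) else {})"
    by (auto simp: mem_grid_line)
  then show ?thesis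
    using card_shift_mod_preimage[OF assms] by simp
qed

lemma count_image_mset_set:
  "finite A \<Longrightarrow> count (image_mset f (mset_set A)) y = card {x\<in>A. f x = y}"
  by (simp add: count_image_mset Int_def conj_commute vimage_def)

lemma hdeg_image_mset_set:
  "finite I \<Longrightarrow> hdeg (image_mset ed (mset_set I)) v = card {x\<in>I. v \<in> ed x}"
  unfolding hdeg_def by (simp add: filter_mset_image_mset)

lemma restrict_edges_image_mset_set:
  "finite I \<Longrightarrow> restrict_edges (image_mset ed (mset_set I)) S
     = image_mset (\<lambda>x. ed x \<inter> S) (mset_set {x\<in>I. ed x \<inter> S \<noteq> {}})"
  unfolding restrict_edges_def by (simp add: filter_mset_image_mset image_mset.compositionality o_def)

lemma linear_hypergraph_mset_set:
  assumes "finite U" "\<And>e. e \<in> \<E> \<Longrightarrow> e \<noteq> {} \<and> e \<subseteq> U"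
    and "\<And>e f. e \<in> \<E> \<Longrightarrow> f \<in> \<E> \<Longrightarrow> e \<noteq> f \<Longrightarrow> card (e \<inter> f) \<le> 1"
  shows "linear_hypergraph U (mset_set \<E>)"
proof -
  have "finite \<E>"
    using assms(1,2) by (meson PowI finite_Pow_iff finite_subset subsetI)
  then show ?thesis
    using assms
    by (auto simp: linear_hypergraph_def linear_multi_hypergraph_def multi_hypergraph_def
        count_mset_set')
qed

lemma linear_hypergraph_image_mset_set:
  assumes "finite U" "finite I"
    and "\<And>x. x \<in> I \<Longrightarrow> ed x \<subseteq> U" "\<And>x. x \<in> I \<Longrightarrow> 2 \<le> card (ed x)"
    and "\<And>x y. x \<in> I \<Longrightarrow> y \<in> I \<Longrightarrow> x \<noteq> y \<Longrightarrow> card (ed x \<inter> ed y) \<le> 1"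
  shows "linear_hypergraph U (image_mset ed (mset_set I))"
proof -
  have inj: "inj_on ed I"
  proof (rule inj_onI, rule ccontr)
    fix x y assume "x \<in> I" "y \<in> I" "ed x = ed y" "x \<noteq> y"
    then have "card (ed x) \<le> 1" using assms(5) by fastforce
    with assms(4)[OF \<open>x \<in> I\<close>] show False by simp
  qed
  have nonempty: "ed x \<noteq> {}" if "x \<in> I" for x
    using assms(4)[OF that] by (metis card.empty not_numeral_le_zero)
  show ?thesis
    unfolding image_mset_mset_set[OF inj]
  proof (rule linear_hypergraph_mset_set)
    show "finite U" by fact
    show "e \<noteq> {} \<and> e \<subseteq> U" if "e \<in> ed ` I" for e
      using that assms(3) nonempty by blast
    show "card (e \<inter> f) \<le> 1" if "e \<in> ed ` I" "f \<in> ed ` I" "e \<noteq> f" for e f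
      using that assms(5) by blast
  qed
qed

lemma card_extension_bound:
  fixes r D :: nat
  assumes "3 \<le> r" "3 \<le> D"
  shows "1 + r ^ 3 * D ^ 2 \<le> r * (r - 1) ^ 2 * D ^ 3"
proof -
  have "(2 * r) ^ 2 \<le> (3 * (r - 1)) ^ 2"
    using assms(1) by (intro power_mono) auto
  then have "4 * r ^ 3 * D ^ 3 \<le> 9 * (r * (r - 1) ^ 2 * D ^ 3)"
    using mult_le_mono1[of "4 * r ^ 2" "9 * (r - 1) ^ 2" "r * D ^ 3"]
    by (simp add: power_mult_distrib power3_eq_cube power2_eq_square algebra_simps)
  moreover have "12 * r ^ 3 * D ^ 2 \<le> 4 * r ^ 3 * D ^ 3"
    using mult_le_mono1[OF assms(2), of "4 * r ^ 3 * D ^ 2"]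
    by (simp add: power3_eq_cube power2_eq_square algebra_simps)
  moreover have "1 \<le> r ^ 3 * D ^ 2"
    using assms by simp
  ultimately show ?thesis by linarith
qed

(* A seed Inl e is an edge of size at least two, a seed Inr (v, k) stands for the k-th singleton
   edge at v; its core is the part of its padded edge inside V. *)
definition core :: "'a set + 'a \<times> nat \<Rightarrow> 'a set" where
  "core p = (case p of Inl e \<Rightarrow> e | Inr (v, k) \<Rightarrow> {v})"

lemma core_simps [simp]: "core (Inl e) = e" "core (Inr (v, k)) = {v}"
  by (simp_all add: core_def)

definition gadget_vertex :: "nat \<Rightarrow> nat \<times> nat \<Rightarrow> 'a + nat" where
  "gadget_vertex \<sigma> z = Inr (prod_encode (\<sigma>, prod_encode z))"

lemma gadget_vertex_eq_iff [simp]: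
  "gadget_vertex \<sigma> z = gadget_vertex \<sigma>' z' \<longleftrightarrow> \<sigma> = \<sigma>' \<and> z = z'"
  by (simp add: gadget_vertex_def)

lemma gadget_vertex_neq_Inl [simp]: "gadget_vertex \<sigma> z \<noteq> Inl v" "Inl v \<noteq> gadget_vertex \<sigma> z"
  by (simp_all add: gadget_vertex_def)

lemma inj_gadget_vertex: "inj (gadget_vertex \<sigma>)"
  by (simp add: inj_def)

lemma card_gadget_vertex_image: "card (gadget_vertex \<sigma> ` A) = card A"
  by (rule card_image) (simp add: inj_on_def)

locale uniformisation =
  fixes r D C :: nat and V :: "'a set" and E :: "'a set multiset"
  assumes two_le_r: "2 \<le> r" and D_pos: "0 < D" and C_pos: "0 < C"
    and linear: "linear_multi_hypergraph V E"
    and degree_le: "\<And>v. v \<in> V \<Longrightarrow> hdeg E v \<le> D"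
    and edge_size_le: "\<And>e. e \<in># E \<Longrightarrow> card e \<le> r"
begin

definition "q = r * D"
definition "big_edges = {e. e \<in># E \<and> 2 \<le> card e}"
definition "extra v = (if hdeg E v < D - C then D - hdeg E v else 0)"
definition "old_slots = {(v, k). v \<in> V \<and> k < count E {v}}"
definition "new_slots = {(v, k). v \<in> V \<and> count E {v} \<le> k \<and> k < count E {v} + extra v}"
definition "old_seeds = Inl ` big_edges \<union> Inr ` old_slots"
definition "seeds = old_seeds \<union> Inr ` new_slots"
definition "label p j = prod_encode (to_nat_on seeds p, j)"
definition "padded p = Inl ` core p \<union> (\<lambda>j. gadget_vertex (label p j) (0, 0)) ` {..<r - card (core p)}"
definition "labels = (\<lambda>(p, j). label p j) ` (seeds \<times> {..<r})"
definition "lines = labels \<times> {..<D - 1} \<times> {..<q}"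
definition "edge_of x =
  (case x of Inl p \<Rightarrow> padded p | Inr (\<sigma>, s, a) \<Rightarrow> gadget_vertex \<sigma> ` grid_line q r s a)"
definition "index = Inl ` seeds \<union> Inr ` lines"
definition "F = image_mset edge_of (mset_set index)"
definition "U = Inl ` V \<union> (\<Union>\<sigma>\<in>labels. gadget_vertex \<sigma> ` ({..<r} \<times> {..<q}))"

lemma finite_V: "finite V"
  using linear by (simp add: linear_multi_hypergraph_def multi_hypergraph_def)

lemma edge_subset_V: "e \<in># E \<Longrightarrow> e \<noteq> {} \<and> e \<subseteq> V"
  using linear by (simp add: linear_multi_hypergraph_def multi_hypergraph_def)

lemma count_singleton_le_hdeg: "count E {v} \<le> hdeg E v"
proof -
  have "count E {v} = count (filter_mset (\<lambda>e. v \<in> e) E) {v}" by simp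
  also have "\<dots> \<le> hdeg E v" unfolding hdeg_def by (rule count_le_size)
  finally show ?thesis .
qed

lemma hdeg_plus_extra_le: "v \<in> V \<Longrightarrow> hdeg E v + extra v \<le> D"
  using degree_le by (simp add: extra_def)

lemma finite_seeds: "finite seeds"
proof -
  have "count E {v} + extra v \<le> D" if "v \<in> V" for v
    using count_singleton_le_hdeg[of v] hdeg_plus_extra_le[OF that] by linarith
  then have "big_edges \<subseteq> set_mset E" "old_slots \<union> new_slots \<subseteq> V \<times> {..<D}"
    by (fastforce simp: big_edges_def old_slots_def new_slots_def)+
  then show ?thesis
    using finite_V unfolding seeds_def old_seeds_def
    by (metis finite_Un finite_SigmaI finite_imageI finite_lessThan finite_set_mset finite_subset)
qed

lemma core_seed:
  assumes "p \<in> seeds"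
  shows "core p \<noteq> {}" "core p \<subseteq> V" "card (core p) \<le> r"
  using assms two_le_r
  by (fastforce simp: seeds_def old_seeds_def big_edges_def old_slots_def new_slots_def
      dest: edge_subset_V edge_size_le)+

lemma finite_core: "p \<in> seeds \<Longrightarrow> finite (core p)"
  using core_seed finite_V finite_subset by blast

lemma card_core_Int:
  assumes "p \<in> seeds" "p' \<in> seeds" "p \<noteq> p'"
  shows "card (core p \<inter> core p') \<le> 1"
proof (cases "\<exists>e e'. p = Inl e \<and> p' = Inl e'")
  case True
  then obtain e e' where "p = Inl e" "p' = Inl e'" by blast
  with assms have "e \<in># E" "e' \<in># E" "2 \<le> card e" "2 \<le> card e'" "e \<noteq> e'"
    by (auto simp: seeds_def old_seeds_def big_edges_def)
  with linear \<open>p = Inl e\<close> \<open>p' = Inl e'\<close> show ?thesis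
    unfolding linear_multi_hypergraph_def by simp
next
  case False
  then have "\<exists>v. core p = {v} \<or> core p' = {v}"
    by (cases p; cases p') auto
  then obtain v where "core p \<inter> core p' \<subseteq> {v}" by blast
  then show ?thesis
    by (auto dest: subset_singletonD)
qed

lemma q_pos: "0 < q"
  using two_le_r D_pos by (simp add: q_def)

lemma label_eq_iff [simp]:
  "p \<in> seeds \<Longrightarrow> p' \<in> seeds \<Longrightarrow> label p j = label p' j' \<longleftrightarrow> p = p' \<and> j = j'"
  using finite_seeds by (simp add: label_def countable_finite)

lemma Inl_in_padded [simp]: "Inl v \<in> padded p \<longleftrightarrow> v \<in> core p"
  by (auto simp: padded_def)

lemma gadget_vertex_in_padded:
  "gadget_vertex \<sigma> z \<in> padded p \<longleftrightarrow> z = (0, 0) \<and> (\<exists>j < r - card (core p). \<sigma> = label p j)"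
  by (auto simp: padded_def)

lemma card_padded:
  assumes "p \<in> seeds"
  shows "card (padded p) = r"
proof -
  let ?pads = "(\<lambda>j. gadget_vertex (label p j) (0, 0)) ` {..<r - card (core p)} :: ('a + nat) set"
  have "card (padded p) = card (Inl ` core p :: ('a + nat) set) + card ?pads"
    unfolding padded_def using finite_core[OF assms] by (intro card_Un_disjoint) auto
  also have "\<dots> = card (core p) + (r - card (core p))"
    using assms by (simp add: card_image inj_on_def)
  finally show ?thesis
    using core_seed(3)[OF assms] by simp
qed

lemma card_padded_Int_padded:
  assumes "p \<in> seeds" "p' \<in> seeds" "p \<noteq> p'"
  shows "card (padded p \<inter> padded p') \<le> 1"
proof -
  have "padded p \<inter> padded p' = Inl ` (core p \<inter> core p')"
    using assms by (auto simp: padded_def)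
  then show ?thesis
    using card_core_Int[OF assms] by (simp add: card_image)
qed

lemma card_padded_Int_gadget:
  "card (padded p \<inter> gadget_vertex \<sigma> ` L) \<le> 1"
proof -
  have "padded p \<inter> gadget_vertex \<sigma> ` L \<subseteq> {gadget_vertex \<sigma> (0, 0)}"
    by (auto simp: gadget_vertex_in_padded)
  then show ?thesis
    by (auto dest: subset_singletonD)
qed

lemma finite_labels: "finite labels"
  using finite_seeds by (simp add: labels_def)

lemma finite_index: "finite index"
  using finite_seeds finite_labels by (simp add: index_def lines_def)

lemma finite_U: "finite U"
  using finite_V finite_labels by (simp add: U_def)

lemma card_edge_of:
  assumes "x \<in> index"
  shows "card (edge_of x) = r"
  using assms card_padded
  by (auto simp: index_def edge_of_def card_gadget_vertex_image card_grid_line)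

lemma Inl_in_U: "v \<in> V \<Longrightarrow> Inl v \<in> U"
  by (simp add: U_def)

lemma gadget_vertex_in_U: "\<sigma> \<in> labels \<Longrightarrow> i < r \<Longrightarrow> x < q \<Longrightarrow> gadget_vertex \<sigma> (i, x) \<in> U"
  by (auto simp: U_def)

lemma edge_of_subset_U:
  assumes "x \<in> index"
  shows "edge_of x \<subseteq> U"
proof (cases x)
  case (Inl p)
  with assms have p: "p \<in> seeds" by (auto simp: index_def)
  have "label p j \<in> labels" if "j < r - card (core p)" for j
    using p that by (force simp: labels_def)
  then have "gadget_vertex (label p j) (0, 0) \<in> U" if "j < r - card (core p)" for j
    using that two_le_r q_pos by (intro gadget_vertex_in_U) auto
  then show ?thesis
    using Inl core_seed(2)[OF p] by (auto simp: edge_of_def padded_def intro: Inl_in_U)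
next
  case (Inr l)
  with assms obtain \<sigma> s a where "x = Inr (\<sigma>, s, a)" "\<sigma> \<in> labels"
    by (auto simp: index_def lines_def)
  then show ?thesis
    using grid_line_subset[OF q_pos] by (auto simp: edge_of_def intro!: gadget_vertex_in_U)
qed

lemma card_line_Int_line:
  assumes "s < D - 1" "a < q" "s' < D - 1" "a' < q" "(\<sigma>, s, a) \<noteq> (\<sigma>', s', a')"
  shows "card (gadget_vertex \<sigma> ` grid_line q r s a \<inter> gadget_vertex \<sigma>' ` grid_line q r s' a'
    :: ('a + nat) set) \<le> 1"
proof (cases "\<sigma> = \<sigma>'")
  case True
  have "card (grid_line q r s a \<inter> grid_line q r s' a') \<le> 1"
    using assms True by (intro card_grid_line_Int[where m = "D - 1"]) (auto simp: q_def)
  then show ?thesis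
    using True by (simp add: image_Int[OF inj_gadget_vertex, symmetric] card_gadget_vertex_image)
next
  case False
  then have "gadget_vertex \<sigma> ` grid_line q r s a \<inter> gadget_vertex \<sigma>' ` grid_line q r s' a'
    = ({} :: ('a + nat) set)"
    by auto
  then show ?thesis by simp
qed

lemma card_edge_of_Int:
  assumes "x \<in> index" "y \<in> index" "x \<noteq> y"
  shows "card (edge_of x \<inter> edge_of y) \<le> 1"
proof (cases x)
  case (Inl p)
  show ?thesis
  proof (cases y)
    case (Inl p')
    with \<open>x = Inl p\<close> assms show ?thesis
      using card_padded_Int_padded[of p p'] by (auto simp: index_def edge_of_def)
  next
    case (Inr l)
    then show ?thesis
      using \<open>x = Inl p\<close> card_padded_Int_gadget by (auto simp: edge_of_def split: prod.split)
  qed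
next
  case (Inr l)
  show ?thesis
  proof (cases y)
    case (Inl p')
    obtain \<sigma> s a where "l = (\<sigma>, s, a)" by (cases l)
    then have "edge_of x \<inter> edge_of y = padded p' \<inter> gadget_vertex \<sigma> ` grid_line q r s a"
      using \<open>x = Inr l\<close> Inl by (auto simp: edge_of_def)
    then show ?thesis
      by (metis card_padded_Int_gadget)
  next
    case (Inr l')
    obtain \<sigma> s a \<sigma>' s' a' where xy: "x = Inr (\<sigma>, s, a)" "y = Inr (\<sigma>', s', a')"
      using \<open>x = Inr l\<close> Inr by (metis prod_cases3)
    with assms have "s < D - 1" "a < q" "s' < D - 1" "a' < q" "(\<sigma>, s, a) \<noteq> (\<sigma>', s', a')"
      by (auto simp: index_def lines_def)
    then show ?thesis
      using card_line_Int_line xy by (simp add: edge_of_def)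
  qed
qed

lemma linear_hypergraph_F: "linear_hypergraph U F"
  unfolding F_def
  using finite_U finite_index edge_of_subset_U card_edge_of card_edge_of_Int two_le_r
  by (intro linear_hypergraph_image_mset_set) auto

lemma uniform_F: "uniform r F"
  using finite_index card_edge_of by (simp add: F_def uniform_def)

lemma two_le_card_if_not_singleton:
  assumes "e \<in># E" "\<nexists>v. e = {v}"
  shows "2 \<le> card e"
proof -
  have "finite e" "e \<noteq> {}"
    using edge_subset_V[OF assms(1)] finite_V finite_subset by auto
  then have "card e \<noteq> 0" "card e \<noteq> 1"
    using assms(2) by (auto simp: card_1_singleton_iff)
  then show ?thesis by linarith
qed

lemma finite_old_seeds: "finite old_seeds"
  using finite_seeds by (simp add: seeds_def)

lemma E_eq_image_core: "E = image_mset core (mset_set old_seeds)"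
proof (rule multiset_eqI)
  fix X
  have "count (image_mset core (mset_set old_seeds)) X = card {p\<in>old_seeds. core p = X}"
    by (rule count_image_mset_set[OF finite_old_seeds])
  also have "\<dots> = count E X"
  proof (cases "\<exists>v. X = {v}")
    case True
    then obtain v where X: "X = {v}" by blast
    have "{p\<in>old_seeds. core p = X} = Inr ` ({v} \<times> {..<count E X})"
    proof (cases "v \<in> V")
      case True
      then show ?thesis
        using X by (auto simp: old_seeds_def old_slots_def big_edges_def)
    next
      case False
      then have "count E X = 0"
        using X edge_subset_V by (auto simp: count_eq_zero_iff)
      then show ?thesis
        using X False by (auto simp: old_seeds_def old_slots_def big_edges_def)
    qed
    then show ?thesis by (simp add: card_image)
  next
    case False
    then have "{p\<in>old_seeds. core p = X} = (if X \<in> big_edges then {Inl X} else {})"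
      by (auto simp: old_seeds_def old_slots_def)
    moreover have "count E X = (if X \<in> big_edges then 1 else 0)"
      using linear two_le_card_if_not_singleton[of X] False
      by (auto simp: big_edges_def linear_multi_hypergraph_def count_eq_zero_iff)
    ultimately show ?thesis by simp
  qed
  finally show "count E X = count (image_mset core (mset_set old_seeds)) X" ..
qed

lemma hdeg_E_eq: "hdeg E v = card {p\<in>old_seeds. v \<in> core p}"
  using hdeg_image_mset_set[OF finite_old_seeds, of core v] by (simp flip: E_eq_image_core)

lemma card_seeds_containing:
  assumes "v \<in> V"
  shows "card {p\<in>seeds. v \<in> core p} = hdeg E v + extra v"
proof -
  let ?new = "Inr ` ({v} \<times> {count E {v}..<count E {v} + extra v}) :: ('a set + 'a \<times> nat) set"
  have "{p\<in>seeds. v \<in> core p} = {p\<in>old_seeds. v \<in> core p} \<union> ?new"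
    using assms by (auto simp: seeds_def new_slots_def)
  moreover have "{p\<in>old_seeds. v \<in> core p} \<inter> ?new = {}"
    by (auto simp: old_seeds_def old_slots_def)
  ultimately have "card {p\<in>seeds. v \<in> core p} = card {p\<in>old_seeds. v \<in> core p} + card ?new"
    using finite_old_seeds by (simp add: card_Un_disjoint)
  also have "card ?new = extra v"
    by (simp add: card_image)
  finally show ?thesis
    by (simp add: hdeg_E_eq)
qed

lemma hdeg_F: "hdeg F w = card {x\<in>index. w \<in> edge_of x}"
  unfolding F_def by (rule hdeg_image_mset_set[OF finite_index])

lemma hdeg_F_Inl:
  assumes "v \<in> V"
  shows "hdeg F (Inl v) = hdeg E v + extra v"
proof -
  have "{x\<in>index. Inl v \<in> edge_of x} = Inl ` {p\<in>seeds. v \<in> core p}"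
    by (auto simp: index_def edge_of_def)
  then show ?thesis
    using assms by (simp add: hdeg_F card_image card_seeds_containing)
qed

lemma card_seeds_containing_gadget_vertex:
  "card {p\<in>seeds. gadget_vertex \<sigma> z \<in> padded p} \<le> 1"
proof -
  have "p = p'" if "p \<in> seeds" "p' \<in> seeds"
    "gadget_vertex \<sigma> z \<in> padded p" "gadget_vertex \<sigma> z \<in> padded p'" for p p'
    using that by (auto simp: gadget_vertex_in_padded)
  then show ?thesis
    using finite_seeds unfolding One_nat_def by (subst card_le_Suc0_iff_eq) auto
qed

lemma hdeg_F_gadget_vertex:
  assumes "\<sigma> \<in> labels" "i < r" "x < q"
  shows "D - 1 \<le> hdeg F (gadget_vertex \<sigma> (i, x))" "hdeg F (gadget_vertex \<sigma> (i, x)) \<le> D"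
proof -
  let ?w = "gadget_vertex \<sigma> (i, x) :: 'a + nat"
  let ?P = "{p\<in>seeds. ?w \<in> padded p}"
  let ?L = "{(s, a). s < D - 1 \<and> a < q \<and> (i, x) \<in> grid_line q r s a}"
  have "{y\<in>index. ?w \<in> edge_of y} = Inl ` ?P \<union> Inr ` ({\<sigma>} \<times> ?L)"
    using assms(1) by (auto simp: index_def lines_def edge_of_def)
  moreover have "finite ?L"
    by (rule finite_subset[of _ "{..<D - 1} \<times> {..<q}"]) auto
  moreover have "card (Inl ` ?P \<union> Inr ` ({\<sigma>} \<times> ?L) :: (('a set + 'a \<times> nat) + nat \<times> nat \<times> nat) set)
      = card ?P + card ?L"
    using \<open>finite ?L\<close> finite_seeds
    by (subst card_Un_disjoint) (auto simp: card_image card_cartesian_product)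
  ultimately have "hdeg F ?w = card ?P + card ?L"
    by (simp add: hdeg_F)
  moreover have "card ?L = D - 1"
    using card_grid_lines_through[OF assms(3)] assms(2) by simp
  ultimately show "D - 1 \<le> hdeg F ?w" "hdeg F ?w \<le> D"
    using card_seeds_containing_gadget_vertex[of \<sigma> "(i, x)"] D_pos by linarith+
qed

lemma hdeg_F_bounds:
  assumes "w \<in> U"
  shows "D - C \<le> hdeg F w \<and> hdeg F w \<le> D"
proof -
  from assms consider (original) v where "v \<in> V" "w = Inl v"
    | (gadget) \<sigma> i x where "\<sigma> \<in> labels" "i < r" "x < q" "w = gadget_vertex \<sigma> (i, x)"
    unfolding U_def by blast
  then show ?thesis
  proof cases
    case original
    then show ?thesis
      using hdeg_F_Inl hdeg_plus_extra_le by (auto simp: extra_def)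
  next
    case gadget
    then show ?thesis
      using hdeg_F_gadget_vertex C_pos by fastforce
  qed
qed

lemma restrict_F:
  "restrict_edges F (Inl ` V)
     = image_mset (image Inl) E + image_mset (\<lambda>p. Inl ` core p) (mset_set (Inr ` new_slots))"
proof -
  have "{x\<in>index. edge_of x \<inter> Inl ` V \<noteq> {}} = Inl ` seeds"
    using core_seed(1,2) by (fastforce simp: index_def edge_of_def padded_def)
  then have "restrict_edges F (Inl ` V) = image_mset (\<lambda>p. padded p \<inter> Inl ` V) (mset_set seeds)"
    unfolding F_def restrict_edges_image_mset_set[OF finite_index]
    by (simp add: image_mset_mset_set[symmetric] image_mset.compositionality o_def edge_of_def)
  also have "\<dots> = image_mset (\<lambda>p. Inl ` core p) (mset_set seeds)"
    using finite_seeds core_seed(2) by (intro image_mset_cong) (auto simp: padded_def)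
  also have "mset_set seeds = mset_set old_seeds + mset_set (Inr ` new_slots)"
    using finite_seeds unfolding seeds_def
    by (intro mset_set_Union) (auto simp: old_seeds_def old_slots_def new_slots_def)
  moreover have "image_mset (image Inl) E
      = (image_mset (\<lambda>p. Inl ` core p) (mset_set old_seeds) :: ('a + nat) set multiset)"
    using arg_cong[OF E_eq_image_core, of "image_mset (image Inl)"]
    by (simp add: image_mset.compositionality o_def)
  ultimately show ?thesis
    by simp
qed

lemma hdeg_F_Inl_eq: "v \<in> V \<Longrightarrow> D - C \<le> hdeg E v \<Longrightarrow> hdeg F (Inl v) = hdeg E v"
  by (simp add: hdeg_F_Inl extra_def)

lemma image_Inl_E_subset_restrict_F: "image_mset (image Inl) E \<subseteq># restrict_edges F (Inl ` V)"
  by (simp add: restrict_F)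

lemma card_restrict_F_minus_E:
  "e \<in># restrict_edges F (Inl ` V) - image_mset (image Inl) E \<Longrightarrow> card e = 1"
  using finite_seeds by (auto simp: restrict_F seeds_def)

lemma card_seeds_le: "card seeds \<le> D * card V"
proof -
  have cover: "(\<Union>v\<in>V. {p\<in>seeds. v \<in> core p}) = seeds"
    using core_seed(1,2) by blast
  have "card seeds \<le> (\<Sum>v\<in>V. card {p\<in>seeds. v \<in> core p})"
    using card_UN_le[OF finite_V, of "\<lambda>v. {p\<in>seeds. v \<in> core p}"] by (simp only: cover)
  also have "\<dots> \<le> (\<Sum>v\<in>V. D)"
    using card_seeds_containing hdeg_plus_extra_le by (intro sum_mono) simp
  finally show ?thesis by (simp add: mult.commute)
qed

lemma card_labels_le: "card labels \<le> r * card seeds"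
  unfolding labels_def using card_image_le[of "seeds \<times> {..<r}"] finite_seeds
  by (simp add: card_cartesian_product mult.commute)

lemma card_U_le: "card U \<le> card V * (1 + r ^ 3 * D ^ 2)"
proof -
  have "card U \<le> card (Inl ` V :: ('a + nat) set)
      + card (\<Union>\<sigma>\<in>labels. gadget_vertex \<sigma> ` ({..<r} \<times> {..<q}) :: ('a + nat) set)"
    unfolding U_def by (rule card_Un_le)
  also have "\<dots> \<le> card V + (\<Sum>\<sigma>\<in>labels. r * q)"
    using card_UN_le[OF finite_labels, of "\<lambda>\<sigma>. gadget_vertex \<sigma> ` ({..<r} \<times> {..<q})"]
    by (simp add: card_image card_gadget_vertex_image)
  also have "\<dots> \<le> card V + r * (D * card V) * (r * q)"
    using card_labels_le card_seeds_le by (simp add: mult_le_mono1 le_trans)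
  also have "\<dots> = card V * (1 + r ^ 3 * D ^ 2)"
    by (simp add: q_def power2_eq_square power3_eq_cube algebra_simps)
  finally show ?thesis .
qed

end

theorem lemma4p4:
  fixes r :: nat
  assumes "3 \<le> r"
  shows "\<exists>N0 D0 C0 :: nat. \<forall>N D C :: nat. \<forall>(V :: 'a set) E.
    N \<ge> N0 \<longrightarrow> C \<ge> C0 \<longrightarrow> D \<ge> D0 \<longrightarrow>
    card V = N \<longrightarrow> linear_multi_hypergraph V E \<longrightarrow>
    (\<forall>v\<in>V. hdeg E v \<le> D) \<longrightarrow> (\<forall>e\<in>#E. card e \<le> r) \<longrightarrow>
    (\<exists>(U :: ('a + nat) set) F.
       linear_hypergraph U F \<and> uniform r F \<and> Inl ` V \<subseteq> U \<and>
       image_mset (image Inl) E \<subseteq># restrict_edges F (Inl ` V) \<and>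
       (\<forall>e\<in># restrict_edges F (Inl ` V) - image_mset (image Inl) E. card e = 1) \<and>
       (\<forall>v\<in>U. D - C \<le> hdeg F v \<and> hdeg F v \<le> D) \<and>
       (\<forall>v\<in>V. hdeg E v \<ge> D - C \<longrightarrow> hdeg F (Inl v) = hdeg E v) \<and>
       card U \<le> r * (r - 1)^2 * D^3 * N)"
proof (rule exI[of _ 0], rule exI[of _ 3], rule exI[of _ 1], intro allI impI, goal_cases)
  case (1 N D C V E)
  then interpret uniformisation r D C V E
    using assms by unfold_locales auto
  have "card U \<le> N * (1 + r ^ 3 * D ^ 2)"
    using card_U_le \<open>card V = N\<close> by simp
  also have "\<dots> \<le> N * (r * (r - 1) ^ 2 * D ^ 3)"
    using card_extension_bound[OF assms \<open>D \<ge> 3\<close>] by (rule mult_le_mono2)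
  finally have "card U \<le> r * (r - 1) ^ 2 * D ^ 3 * N"
    by (simp add: mult.commute)
  then show ?case
    using linear_hypergraph_F uniform_F image_Inl_E_subset_restrict_F
      card_restrict_F_minus_E hdeg_F_bounds hdeg_F_Inl_eq
    by (intro exI[of _ U] exI[of _ F]) (auto intro: Inl_in_U)
qed

end
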